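(* Let $L$ be the field of rational functions over $\mathbb{C}$ in independent indeterminates $\alpha_0,\alpha_1,x,\tau_0,\tau_1,\tau_2,\tau_0',\tau_1',\tau_2'$ (the $\tau_i'$ are new indeterminates), put $\alpha_2:=3-\alpha_0-\alpha_1$, and equip $L$ with the derivation $'$ given by $\alpha_i'=0$, $x'=1$, $(\tau_i)'=\tau_i'$, $(\tau_i')'=\tau_i\big(F_i''+(F_i')^2\big)$, where $F_j':=\tau_j'/\tau_j$ and $$F_i'':=-x(F_{i+1}'-F_{i+2}')-(F_i'-F_{i+1}')(F_i'-F_{i+2}')-\frac{\alpha_{i+1}-\alpha_{i+2}}{3}.$$ Then there are automorphisms $s_0,s_1,s_2,\pi$ of $L$ commuting with $'$ such that $s_i(x)=\pi(x)=x$, $$s_i(\alpha_i)=-\alpha_i,\ s_i(\alpha_j)=\alpha_j+\alpha_i\ (j\ne i),\ \pi(\alpha_j)=\alpha_{j+1},$$ $$s_i(\tau_i)=\frac{1}{\tau_i}(D_x+x)\,\tau_{i+1}\cdot\tau_{i+2}=\frac{\tau_{i+1}'\tau_{i+2}-\tau_{i+1}\tau_{i+2}'+x\tau_{i+1}\tau_{i+2}}{\tau_i},\quad s_i(\tau_j)=\tau_j\ (j\neq i),\quad \pi(\tau_j)=\tau_{j+1},$$ and they satisfy $s_i^2=1$, $s_is_{i+1}s_i=s_{i+1}s_is_{i+1}$, $\pi^3=1$, $\pi s_i=s_{i+1}\pi$; i.e. they give an action of $\widetilde W$ on $L$ by differential automorphisms. Moreover this action is compatible with the action on the $f$-variables: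 setting $\varphi_i:=\tau_{i+1}'/\tau_{i+1}-\tau_{i+2}'/\tau_{i+2}+x\in L$, one has for all $i,j$ $$s_j(\varphi_i)=R^{(j)}_i(\alpha;\varphi),\qquad \pi(\varphi_i)=\varphi_{i+1},$$ where $R^{(j)}_j=\varphi_j$, $R^{(j)}_{j+1}=\varphi_{j+1}-\alpha_j/\varphi_j$, $R^{(j)}_{j+2}=\varphi_{j+2}+\alpha_j/\varphi_j$ (the formulas $s_j(f_j)=f_j$, $s_j(f_{j+1})=f_{j+1}-\alpha_j/f_j$, $s_j(f_{j+2})=f_{j+2}+\alpha_j/f_j$, $\pi(f_i)=f_{i+1}$ with $f$ replaced by $\varphi$).
   Context: Indices are taken modulo 3. Hirota's bilinear operator: $(D_x+x)F\cdot G=F'G-FG'+xFG$. The derivation on $L$ encodes the bilinear system $(D_x^2-xD_x-(\alpha_i-\alpha_{i+1})/3)\tau_i\cdot\tau_{i+1}=0$ ($i=0,1,2$), and the elements $\varphi_i$ satisfy $\varphi_i'+\varphi_i(\varphi_{i+1}-\varphi_{i+2})=\alpha_i$, $\varphi_0+\varphi_1+\varphi_2=3x$ (fourth Painlevé equation in symmetric form), on which $\widetilde W$ acts by $s_j(f_j)=f_j$, $s_j(f_{j+1})=f_{j+1}-\alpha_j/f_j$, $s_j(f_{j+2})=f_{j+2}+\alpha_j/f_j$, $\pi(f_i)=f_{i+1}$. $\widetilde W$ is the extended affine Weyl group of type $A_2^{(1)}$ generated by $s_0,s_1,s_2,\pi$ with the displayed relations. *)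

theory Defs
  imports Complex_Main "HOL-Computational_Algebra.Polynomial" "HOL-Computational_Algebra.Fraction_Field"
begin

text \<open>Level 0 carries alpha0, level 1 alpha1, level 2 x,
levels 3,4,5 carry tau0, tau1, tau2 and levels 6,7,8 carry tau0', tau1', tau2'.\<close>

type_synonym R = "complex poly poly poly poly poly poly poly poly poly"

type_synonym L = "R fract"

definition cst :: "'a::zero \<Rightarrow> 'a poly" where "cst a = [:a:]"

definition genR :: "nat \<Rightarrow> R" where
  "genR k =
    (if k = 0 then cst (cst (cst (cst (cst (cst (cst (cst ([:0,1:] :: complex poly))))))))
     else if k = 1 then cst (cst (cst (cst (cst (cst (cst ([:0,1:] :: complex poly poly)))))))
     else if k = 2 then cst (cst (cst (cst (cst (cst ([:0,1:] :: complex poly poly poly))))))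
     else if k = 3 then cst (cst (cst (cst (cst ([:0,1:] :: complex poly poly poly poly)))))
     else if k = 4 then cst (cst (cst (cst ([:0,1:] :: complex poly poly poly poly poly))))
     else if k = 5 then cst (cst (cst ([:0,1:] :: complex poly poly poly poly poly poly)))
     else if k = 6 then cst (cst ([:0,1:] :: complex poly poly poly poly poly poly poly))
     else if k = 7 then cst ([:0,1:] :: complex poly poly poly poly poly poly poly poly)
     else ([:0,1:] :: R))"

definition gen :: "nat \<Rightarrow> L" where "gen k = Fract (genR k) 1"

definition constC :: "complex \<Rightarrow> L" where
  "constC c = Fract (cst (cst (cst (cst (cst (cst (cst (cst (cst c))))))))) 1"

definition xL :: L where "xL = gen 2"

definition alpha :: "nat \<Rightarrow> L" where
  "alpha i = (if i mod 3 = 0 then gen 0 else if i mod 3 = 1 then gen 1 else 3 - gen 0 - gen 1)"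

definition tau :: "nat \<Rightarrow> L" where "tau i = gen (3 + i mod 3)"

definition taup :: "nat \<Rightarrow> L" where "taup i = gen (6 + i mod 3)"

definition F1 :: "nat \<Rightarrow> L" where "F1 j = taup j / tau j"

definition F2 :: "nat \<Rightarrow> L" where
  "F2 i = - xL * (F1 (i+1) - F1 (i+2)) - (F1 i - F1 (i+1)) * (F1 i - F1 (i+2))
          - (alpha (i+1) - alpha (i+2)) / 3"

definition is_C_derivation :: "(L \<Rightarrow> L) \<Rightarrow> bool" where
  "is_C_derivation D \<longleftrightarrow>
     (\<forall>a b. D (a + b) = D a + D b) \<and>
     (\<forall>a b. D (a * b) = D a * b + a * D b) \<and>
     (\<forall>c. D (constC c) = 0)"

definition is_prime_derivation :: "(L \<Rightarrow> L) \<Rightarrow> bool" where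
  "is_prime_derivation D \<longleftrightarrow>
     is_C_derivation D \<and>
     (\<forall>i. D (alpha i) = 0) \<and> D xL = 1 \<and>
     (\<forall>i. D (tau i) = taup i) \<and>
     (\<forall>i. D (taup i) = tau i * (F2 i + (F1 i)\<^sup>2))"

definition diff_aut :: "(L \<Rightarrow> L) \<Rightarrow> (L \<Rightarrow> L) \<Rightarrow> bool" where
  "diff_aut D f \<longleftrightarrow>
     bij f \<and>
     (\<forall>a b. f (a + b) = f a + f b) \<and>
     (\<forall>a b. f (a * b) = f a * f b) \<and>
     f 1 = 1 \<and>
     (\<forall>c. f (constC c) = constC c) \<and>
     (\<forall>a. f (D a) = D (f a))"

text \<open>Hirota: (D_x + x) F . G = F' G - F G' + x F G.\<close>
definition hirota :: "(L \<Rightarrow> L) \<Rightarrow> L \<Rightarrow> L \<Rightarrow> L" where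
  "hirota D F G = D F * G - F * D G + xL * F * G"

definition phi :: "nat \<Rightarrow> L" where
  "phi i = taup (i+1) / tau (i+1) - taup (i+2) / tau (i+2) + xL"

end

(* The field L is the fraction field of a polynomial ring in nine indeterminates, so a
   C-endomorphism of L is the extension of a substitution of the indeterminates, which exists as
   soon as the substitution is injective on the polynomial ring; injectivity follows by exhibiting
   a substitution undoing it on the indeterminates. Such an endomorphism f commutes with the
   derivation ' once it does so on the indeterminates, because f o ' and ' o f are both
   derivations along f.

   The reflection s_0 negates alpha_0, adds alpha_0 to
   alpha_1, sends tau_0 to the Hirota expression tau_1 tau_2 phi_0 / tau_0 and tau_0' to its
   derivative, and fixes the rest; it is an involution, and it commutes with ' because phi_0
   satisfies the symmetric Painleve IV equation. Putting s_i = pi^i s_0 pi^-i, the relations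
   s_i^2 = 1, pi s_i = s_(i+1) pi and pi^3 = 1 become formal, and the braid relations reduce to
   s_0 s_1 s_0 = s_1 s_0 s_1, which only needs to be checked on alpha_0, alpha_1, x and the
   tau_j. *)

theory Submission
  imports Defs
begin

section \<open>Evaluation of iterated polynomials\<close>

definition is_ring_hom :: "('a::comm_ring_1 \<Rightarrow> 'b::comm_ring_1) \<Rightarrow> bool" where
  "is_ring_hom f \<longleftrightarrow> (\<forall>a b. f (a + b) = f a + f b) \<and> (\<forall>a b. f (a * b) = f a * f b) \<and> f 1 = 1"

lemma ring_hom_add: "is_ring_hom f \<Longrightarrow> f (a + b) = f a + f b"
  and ring_hom_mult: "is_ring_hom f \<Longrightarrow> f (a * b) = f a * f b"
  and ring_hom_1: "is_ring_hom f \<Longrightarrow> f 1 = 1"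
  unfolding is_ring_hom_def by blast+

lemma ring_hom_0: "is_ring_hom f \<Longrightarrow> f 0 = 0"
  using ring_hom_add[of f 0 0] by simp

lemma ring_hom_uminus: "is_ring_hom f \<Longrightarrow> f (- a) = - f a"
  using ring_hom_add[of f "- a" a] ring_hom_0[of f] by (simp add: eq_neg_iff_add_eq_0)

lemma map_poly_add_hom:
  "is_ring_hom f \<Longrightarrow> map_poly f (p + q) = map_poly f p + map_poly f q"
  by (intro poly_eqI) (simp add: coeff_map_poly ring_hom_0 ring_hom_add)

lemma map_poly_mult_hom:
  assumes f: "is_ring_hom f"
  shows "map_poly f (p * q) = map_poly f p * map_poly f q"
proof (induction p)
  case (pCons a p)
  have "map_poly f (pCons a p * q) = map_poly f (smult a q + pCons 0 (p * q))"
    by simp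
  also have "\<dots> = smult (f a) (map_poly f q) + pCons 0 (map_poly f p * map_poly f q)"
    using pCons.IH
    by (simp add: f map_poly_add_hom map_poly_smult map_poly_pCons ring_hom_0 ring_hom_mult)
  also have "\<dots> = map_poly f (pCons a p) * map_poly f q"
    by (simp add: f map_poly_pCons ring_hom_0)
  finally show ?case .
qed simp

definition poly_eval :: "('a::comm_ring_1 \<Rightarrow> 'b::comm_ring_1) \<Rightarrow> 'b \<Rightarrow> 'a poly \<Rightarrow> 'b" where
  "poly_eval f y p = poly (map_poly f p) y"

lemma ring_hom_poly_eval: "is_ring_hom f \<Longrightarrow> is_ring_hom (poly_eval f y)"
  unfolding is_ring_hom_def[of "poly_eval f y"] poly_eval_def
  by (simp add: map_poly_add_hom map_poly_mult_hom ring_hom_1)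

lemma poly_eval_const [simp]: "is_ring_hom f \<Longrightarrow> poly_eval f y [:a:] = f a"
  by (simp add: poly_eval_def map_poly_pCons ring_hom_0)

lemma poly_eval_X [simp]: "is_ring_hom f \<Longrightarrow> poly_eval f y [:0, 1:] = y"
  by (simp add: poly_eval_def map_poly_pCons ring_hom_0 ring_hom_1)

lemma poly_induct_ring_ops:
  fixes P :: "'a::comm_ring_1 poly \<Rightarrow> bool"
  assumes "\<And>a. P [:a:]" "P [:0, 1:]" "\<And>p q. P p \<Longrightarrow> P q \<Longrightarrow> P (p + q)"
    "\<And>p q. P p \<Longrightarrow> P q \<Longrightarrow> P (p * q)"
  shows "P p"
proof (induction p)
  case (pCons a p)
  have "pCons a p = [:a:] + [:0, 1:] * p" by simp
  then show ?case using assms pCons.IH by metis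
qed (use assms(1)[of 0] in simp)

lemma lifted_poly_induct_ring_ops:
  fixes h :: "'a::comm_ring_1 poly \<Rightarrow> 'b::comm_ring_1"
  assumes "\<And>p q. h (p + q) = h p + h q" "\<And>p q. h (p * q) = h p * h q"
    and "\<And>u v. P u \<Longrightarrow> P v \<Longrightarrow> P (u + v)" "\<And>u v. P u \<Longrightarrow> P v \<Longrightarrow> P (u * v)"
    and "\<And>a. P (h [:a:])" "P (h [:0, 1:])"
  shows "P (h p)"
  by (induction p rule: poly_induct_ring_ops) (simp_all add: assms)

definition constR :: "complex \<Rightarrow> R" where
  "constR c = cst (cst (cst (cst (cst (cst (cst (cst (cst c))))))))"

lemma constC_constR: "constC c = Fract (constR c) 1"
  unfolding constC_def constR_def ..

lemma R_induct [case_names add mult const gen]: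
  fixes P :: "R \<Rightarrow> bool"
  assumes add: "\<And>p q. P p \<Longrightarrow> P q \<Longrightarrow> P (p + q)"
    and mult: "\<And>p q. P p \<Longrightarrow> P q \<Longrightarrow> P (p * q)"
    and const: "\<And>c. P (constR c)"
    and gen: "\<And>k. k \<le> 8 \<Longrightarrow> P (genR k)"
  shows "P r"
proof -
  note rule = lifted_poly_induct_ring_ops[where P = P, OF _ _ add mult]
  note gen' = gen[unfolded genR_def cst_def]
  have "P [:[:[:[:[:[:[:[:a:]:]:]:]:]:]:]:]" for a
    by (rule rule[where h = "\<lambda>a. [:[:[:[:[:[:[:[:a:]:]:]:]:]:]:]:]"])
      (simp_all add: gen'[of 0, simplified] const[unfolded constR_def cst_def])
  then have "P [:[:[:[:[:[:[:a:]:]:]:]:]:]:]" for a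
    by - (rule rule[where h = "\<lambda>a. [:[:[:[:[:[:[:a:]:]:]:]:]:]:]"],
      simp_all add: gen'[of 1, simplified])
  then have "P [:[:[:[:[:[:a:]:]:]:]:]:]" for a
    by - (rule rule[where h = "\<lambda>a. [:[:[:[:[:[:a:]:]:]:]:]:]"],
      simp_all add: gen'[of 2, simplified])
  then have "P [:[:[:[:[:a:]:]:]:]:]" for a
    by - (rule rule[where h = "\<lambda>a. [:[:[:[:[:a:]:]:]:]:]"],
      simp_all add: gen'[of 3, simplified])
  then have "P [:[:[:[:a:]:]:]:]" for a
    by - (rule rule[where h = "\<lambda>a. [:[:[:[:a:]:]:]:]"],
      simp_all add: gen'[of 4, simplified])
  then have "P [:[:[:a:]:]:]" for a
    by - (rule rule[where h = "\<lambda>a. [:[:[:a:]:]:]"],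
      simp_all add: gen'[of 5, simplified])
  then have "P [:[:a:]:]" for a
    by - (rule rule[where h = "\<lambda>a. [:[:a:]:]"],
      simp_all add: gen'[of 6, simplified])
  then have "P [:a:]" for a
    by - (rule rule[where h = "\<lambda>a. [:a:]"],
      simp_all add: gen'[of 7, simplified])
  then show "P r"
    using rule[where h = id] by (simp add: gen'[of 8, simplified])
qed

lemma ring_hom_constC: "is_ring_hom constC"
  unfolding is_ring_hom_def constC_def cst_def by (simp add: One_fract_def pCons_one mult.commute)

definition subst_R :: "(nat \<Rightarrow> L) \<Rightarrow> R \<Rightarrow> L" where
  "subst_R y = poly_eval (poly_eval (poly_eval (poly_eval (poly_eval (poly_eval (poly_eval
     (poly_eval (poly_eval constC (y 0)) (y 1)) (y 2)) (y 3)) (y 4)) (y 5)) (y 6)) (y 7)) (y 8)"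

lemma ring_hom_subst_R: "is_ring_hom (subst_R y)"
  unfolding subst_R_def by (intro ring_hom_poly_eval ring_hom_constC)

lemma subst_R_genR: "k \<le> 8 \<Longrightarrow> subst_R y (genR k) = y k"
proof -
  assume "k \<le> 8"
  then have "k \<in> {0, 1, 2, 3, 4, 5, 6, 7, 8}" by auto
  then show ?thesis
    unfolding subst_R_def genR_def cst_def
    by (auto simp: ring_hom_constC ring_hom_poly_eval)
qed

lemma subst_R_constR: "subst_R y (constR c) = constC c"
  unfolding subst_R_def constR_def cst_def by (simp add: ring_hom_constC ring_hom_poly_eval)

lemma subst_R_0 [simp]: "subst_R y 0 = 0"
  and subst_R_add: "subst_R y (a + b) = subst_R y a + subst_R y b"
  and subst_R_mult: "subst_R y (a * b) = subst_R y a * subst_R y b"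
  and subst_R_uminus: "subst_R y (- a) = - subst_R y a"
  using ring_hom_subst_R
  by (simp_all add: ring_hom_0 ring_hom_add ring_hom_mult ring_hom_uminus)

lemma subst_R_of_nat: "subst_R y (of_nat n) = of_nat n"
  using ring_hom_subst_R by (induction n) (simp_all add: ring_hom_1 subst_R_add)

section \<open>Substitution homomorphisms of the field \<open>L\<close>\<close>

text \<open>The extension of \<open>subst_R y\<close> to fractions; it is a homomorphism on the local ring
  \<open>subst_dom y\<close> of fractions whose denominator does not vanish, and arbitrary outside it.\<close>

definition subst_dom :: "(nat \<Rightarrow> L) \<Rightarrow> L set" where
  "subst_dom y = {Fract a b | a b. subst_R y b \<noteq> 0}"

definition subst :: "(nat \<Rightarrow> L) \<Rightarrow> L \<Rightarrow> L" where
  "subst y q = (SOME v. \<exists>a b. q = Fract a b \<and> subst_R y b \<noteq> 0 \<and> v = subst_R y a / subst_R y b)"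

lemma subst_Fract:
  assumes b: "subst_R y b \<noteq> 0"
  shows "subst y (Fract a b) = subst_R y a / subst_R y b"
  unfolding subst_def
proof (rule someI2)
  fix v
  assume "\<exists>a' b'. Fract a b = Fract a' b' \<and> subst_R y b' \<noteq> 0 \<and> v = subst_R y a' / subst_R y b'"
  then obtain c d
    where cd: "Fract a b = Fract c d" "subst_R y d \<noteq> 0" "v = subst_R y c / subst_R y d"
    by blast
  have "b \<noteq> 0" "d \<noteq> 0" using b cd(2) by auto
  with cd(1) have "a * d = c * b" by (simp add: eq_fract)
  then have "subst_R y a * subst_R y d = subst_R y c * subst_R y b" by (metis subst_R_mult)
  with b cd show "v = subst_R y a / subst_R y b" by (simp add: frac_eq_eq)
qed (use b in blast)

lemma subst_domI: "q = Fract a b \<Longrightarrow> subst_R y b \<noteq> 0 \<Longrightarrow> q \<in> subst_dom y"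
  unfolding subst_dom_def by blast

lemma subst_domE:
  assumes "q \<in> subst_dom y"
  obtains a b where "q = Fract a b" "b \<noteq> 0" "subst_R y b \<noteq> 0"
  using assms unfolding subst_dom_def by fastforce

lemma subst_dom_Fract1: "Fract a 1 \<in> subst_dom y"
  and subst_Fract1: "subst y (Fract a 1) = subst_R y a"
  using ring_hom_subst_R[of y] by (auto intro: subst_domI simp: subst_Fract ring_hom_1)

lemma subst_dom_add [simp]: "q \<in> subst_dom y \<Longrightarrow> r \<in> subst_dom y \<Longrightarrow> q + r \<in> subst_dom y"
  and subst_add [simp]:
    "q \<in> subst_dom y \<Longrightarrow> r \<in> subst_dom y \<Longrightarrow> subst y (q + r) = subst y q + subst y r"
proof -
  assume "q \<in> subst_dom y" "r \<in> subst_dom y"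
  then obtain a b c d where q: "q = Fract a b" "b \<noteq> 0" "subst_R y b \<noteq> 0"
    and r: "r = Fract c d" "d \<noteq> 0" "subst_R y d \<noteq> 0"
    by (metis subst_domE)
  have sum: "q + r = Fract (a * d + c * b) (b * d)" and nz: "subst_R y (b * d) \<noteq> 0"
    using q r by (simp_all add: subst_R_mult)
  show "q + r \<in> subst_dom y" using sum nz by (rule subst_domI)
  show "subst y (q + r) = subst y q + subst y r"
    using nz q r by (simp add: sum subst_Fract subst_R_mult subst_R_add field_simps)
qed

lemma subst_dom_mult [simp]: "q \<in> subst_dom y \<Longrightarrow> r \<in> subst_dom y \<Longrightarrow> q * r \<in> subst_dom y"
  and subst_mult [simp]:
    "q \<in> subst_dom y \<Longrightarrow> r \<in> subst_dom y \<Longrightarrow> subst y (q * r) = subst y q * subst y r"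
proof -
  assume "q \<in> subst_dom y" "r \<in> subst_dom y"
  then obtain a b c d where q: "q = Fract a b" "b \<noteq> 0" "subst_R y b \<noteq> 0"
    and r: "r = Fract c d" "d \<noteq> 0" "subst_R y d \<noteq> 0"
    by (metis subst_domE)
  have prod: "q * r = Fract (a * c) (b * d)" and nz: "subst_R y (b * d) \<noteq> 0"
    using q r by (simp_all add: subst_R_mult)
  show "q * r \<in> subst_dom y" using prod nz by (rule subst_domI)
  show "subst y (q * r) = subst y q * subst y r"
    using nz q r by (simp add: prod subst_Fract subst_R_mult)
qed

lemma subst_dom_uminus [simp]: "q \<in> subst_dom y \<Longrightarrow> - q \<in> subst_dom y"
  and subst_uminus [simp]: "q \<in> subst_dom y \<Longrightarrow> subst y (- q) = - subst y q"
proof -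
  assume "q \<in> subst_dom y"
  then obtain a b where q: "q = Fract a b" "b \<noteq> 0" "subst_R y b \<noteq> 0"
    by (metis subst_domE)
  have neg: "- q = Fract (- a) b" using q by simp
  show "- q \<in> subst_dom y" using neg q(3) by (rule subst_domI)
  show "subst y (- q) = - subst y q"
    using q by (simp add: neg subst_Fract subst_R_uminus)
qed

lemma subst_dom_diff [simp]: "q \<in> subst_dom y \<Longrightarrow> r \<in> subst_dom y \<Longrightarrow> q - r \<in> subst_dom y"
  and subst_diff [simp]:
    "q \<in> subst_dom y \<Longrightarrow> r \<in> subst_dom y \<Longrightarrow> subst y (q - r) = subst y q - subst y r"
  by (simp_all add: diff_conv_add_uminus del: add_uminus_conv_diff)

lemma subst_dom_divide [simp]:
    "q \<in> subst_dom y \<Longrightarrow> r \<in> subst_dom y \<Longrightarrow> subst y r \<noteq> 0 \<Longrightarrow> q / r \<in> subst_dom y"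
  and subst_divide [simp]: "q \<in> subst_dom y \<Longrightarrow> r \<in> subst_dom y \<Longrightarrow> subst y r \<noteq> 0 \<Longrightarrow>
    subst y (q / r) = subst y q / subst y r"
proof -
  assume "q \<in> subst_dom y" "r \<in> subst_dom y" and r_nz: "subst y r \<noteq> 0"
  then obtain a b c d where q: "q = Fract a b" "b \<noteq> 0" "subst_R y b \<noteq> 0"
    and r: "r = Fract c d" "d \<noteq> 0" "subst_R y d \<noteq> 0"
    by (metis subst_domE)
  have c: "subst_R y c \<noteq> 0" using r_nz r by (simp add: subst_Fract)
  have quot: "q / r = Fract (a * d) (b * c)" and nz: "subst_R y (b * c) \<noteq> 0"
    using q r c by (simp_all add: subst_R_mult)
  show "q / r \<in> subst_dom y" using quot nz by (rule subst_domI)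
  show "subst y (q / r) = subst y q / subst y r"
    using nz q r c by (simp add: quot subst_Fract subst_R_mult)
qed

lemma subst_dom_gen [simp]: "gen k \<in> subst_dom y"
  and subst_gen [simp]: "k \<le> 8 \<Longrightarrow> subst y (gen k) = y k"
  unfolding gen_def by (simp_all add: subst_dom_Fract1 subst_Fract1 subst_R_genR)

lemma subst_dom_constC [simp]: "constC c \<in> subst_dom y"
  and subst_constC [simp]: "subst y (constC c) = constC c"
  using subst_dom_Fract1[of "constR c" y] subst_Fract1[of y "constR c"]
  by (simp_all add: subst_R_constR flip: constC_constR)

lemma subst_dom_of_nat [simp]: "of_nat n \<in> subst_dom y"
  and subst_of_nat [simp]: "subst y (of_nat n) = of_nat n"
  using subst_dom_Fract1[of "of_nat n" y] subst_Fract1[of y "of_nat n"]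
  by (simp_all add: subst_R_of_nat flip: of_nat_fract)

lemma subst_dom_numeral [simp]: "numeral n \<in> subst_dom y"
  and subst_numeral [simp]: "subst y (numeral n) = numeral n"
  using subst_dom_of_nat[of "numeral n" y] subst_of_nat[of y "numeral n"] by simp_all

lemma subst_dom_0 [simp]: "0 \<in> subst_dom y"
  and subst_0 [simp]: "subst y 0 = 0"
  and subst_dom_1 [simp]: "1 \<in> subst_dom y"
  and subst_1 [simp]: "subst y 1 = 1"
  using subst_dom_of_nat[of 0 y] subst_of_nat[of y 0] subst_dom_of_nat[of 1 y] subst_of_nat[of y 1]
  by simp_all

lemma inj_subst_R_if_inverse:
  assumes inv: "\<And>k. k \<le> 8 \<Longrightarrow> y k \<in> subst_dom z \<and> subst z (y k) = gen k"
  shows "inj (subst_R y)"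
proof -
  have undo: "subst_R y r \<in> subst_dom z \<and> subst z (subst_R y r) = Fract r 1" for r
  proof (induction r rule: R_induct)
    case (const c)
    show ?case by (simp add: subst_R_constR flip: constC_constR)
  next
    case (gen k)
    then show ?case using inv by (simp add: subst_R_genR gen_def)
  qed (simp_all add: subst_R_add subst_R_mult)
  show ?thesis
  proof (rule injI)
    fix a b
    assume "subst_R y a = subst_R y b"
    then have "Fract a 1 = Fract b 1" using undo by metis
    then show "a = b" by (simp add: eq_fract)
  qed
qed

section \<open>Field endomorphisms of \<open>L\<close>\<close>

definition is_field_endo :: "(L \<Rightarrow> L) \<Rightarrow> bool" where
  "is_field_endo f \<longleftrightarrow> is_ring_hom f \<and> (\<forall>c. f (constC c) = constC c)"

lemma subst_dom_if_inj: "inj (subst_R y) \<Longrightarrow> q \<in> subst_dom y"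
proof (cases q)
  case (Fract a b)
  assume "inj (subst_R y)"
  then have "subst_R y b \<noteq> 0" using Fract by (metis subst_R_0 injD)
  with Fract show ?thesis by (blast intro: subst_domI)
qed

lemma field_endo_subst: "inj (subst_R y) \<Longrightarrow> is_field_endo (subst y)"
  unfolding is_field_endo_def is_ring_hom_def by (simp add: subst_dom_if_inj)

lemma field_endo_add: "is_field_endo f \<Longrightarrow> f (a + b) = f a + f b"
  and field_endo_mult: "is_field_endo f \<Longrightarrow> f (a * b) = f a * f b"
  and field_endo_1: "is_field_endo f \<Longrightarrow> f 1 = 1"
  and field_endo_0: "is_field_endo f \<Longrightarrow> f 0 = 0"
  and field_endo_uminus: "is_field_endo f \<Longrightarrow> f (- a) = - f a"
  and field_endo_constC: "is_field_endo f \<Longrightarrow> f (constC c) = constC c"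
  unfolding is_field_endo_def
  by (simp_all add: ring_hom_add ring_hom_mult ring_hom_1 ring_hom_0 ring_hom_uminus)

lemma field_endo_diff: "is_field_endo f \<Longrightarrow> f (a - b) = f a - f b"
  using field_endo_add[of f a "- b"] field_endo_uminus[of f b] by simp

lemma field_endo_inverse: "is_field_endo f \<Longrightarrow> f (inverse a) = inverse (f a)"
proof (cases "a = 0")
  case False
  assume f: "is_field_endo f"
  have "f a * f (inverse a) = 1"
    using False by (simp add: f field_endo_1 flip: field_endo_mult)
  then show ?thesis by (metis inverse_unique)
qed (simp add: field_endo_0)

lemma field_endo_divide: "is_field_endo f \<Longrightarrow> f (a / b) = f a / f b"
  by (simp add: divide_inverse field_endo_mult field_endo_inverse)

lemma field_endo_eq_0_iff:
  assumes f: "is_field_endo f"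
  shows "f a = 0 \<longleftrightarrow> a = 0"
proof
  assume "f a = 0"
  show "a = 0"
  proof (rule ccontr)
    assume "a \<noteq> 0"
    then have "f a * f (inverse a) = 1" by (simp add: f field_endo_1 flip: field_endo_mult)
    with \<open>f a = 0\<close> show False by simp
  qed
qed (simp add: f field_endo_0)

lemma field_endo_of_nat: "is_field_endo f \<Longrightarrow> f (of_nat n) = of_nat n"
  by (induction n) (simp_all add: field_endo_0 field_endo_1 field_endo_add)

lemma field_endo_numeral: "is_field_endo f \<Longrightarrow> f (numeral n) = numeral n"
  using field_endo_of_nat[of f "numeral n"] by simp

lemma field_endo_power: "is_field_endo f \<Longrightarrow> f (a ^ n) = f a ^ n"
  by (induction n) (simp_all add: field_endo_1 field_endo_mult)

lemmas field_endo_simps =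
  field_endo_add field_endo_mult field_endo_1 field_endo_0 field_endo_uminus field_endo_constC
  field_endo_diff field_endo_divide field_endo_numeral field_endo_power

lemma field_endo_comp: "is_field_endo f \<Longrightarrow> is_field_endo g \<Longrightarrow> is_field_endo (f \<circ> g)"
  and field_endo_id: "is_field_endo id"
  unfolding is_field_endo_def is_ring_hom_def by simp_all

lemma field_endo_ext:
  assumes f: "is_field_endo f" and g: "is_field_endo g"
    and gens: "\<And>k. k \<le> 8 \<Longrightarrow> f (gen k) = g (gen k)"
  shows "f = g"
proof
  have on_R: "f (Fract r 1) = g (Fract r 1)" for r
  proof (induction r rule: R_induct)
    case (add p q)
    have "Fract (p + q) 1 = Fract p 1 + Fract q 1" by simp
    with add show ?case by (simp only: field_endo_add f g)
  next
    case (mult p q)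
    have "Fract (p * q) 1 = Fract p 1 * Fract q 1" by simp
    with mult show ?case by (simp only: field_endo_mult f g)
  next
    case (const c)
    show ?case using field_endo_constC[OF f] field_endo_constC[OF g] by (simp add: constC_constR)
  next
    case (gen k)
    then show ?case using gens by (simp add: gen_def)
  qed
  fix q
  show "f q = g q"
  proof (cases q)
    case (Fract a b)
    then have "q = Fract a 1 / Fract b 1" by simp
    then show ?thesis using on_R[of a] on_R[of b] by (simp only: field_endo_divide f g)
  qed
qed

lemma diff_aut_iff: "diff_aut D f \<longleftrightarrow> is_field_endo f \<and> bij f \<and> f \<circ> D = D \<circ> f"
  unfolding diff_aut_def is_field_endo_def is_ring_hom_def fun_eq_iff comp_def by blast

lemma diff_aut_comp: "diff_aut D f \<Longrightarrow> diff_aut D g \<Longrightarrow> diff_aut D (f \<circ> g)"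
  unfolding diff_aut_iff by (simp add: bij_comp field_endo_comp) (metis comp_assoc)

section \<open>Derivations\<close>

lemma derivation_0: "is_C_derivation D \<Longrightarrow> D 0 = 0"
  unfolding is_C_derivation_def by (metis add_cancel_right_right add_0)

lemma derivation_add: "is_C_derivation D \<Longrightarrow> D (a + b) = D a + D b"
  and derivation_mult: "is_C_derivation D \<Longrightarrow> D (a * b) = D a * b + a * D b"
  unfolding is_C_derivation_def by blast+

lemma derivation_uminus: "is_C_derivation D \<Longrightarrow> D (- a) = - D a"
  using derivation_add[of D "- a" a] derivation_0[of D] by (simp add: eq_neg_iff_add_eq_0)

lemma derivation_diff: "is_C_derivation D \<Longrightarrow> D (a - b) = D a - D b"
  using derivation_add[of D a "- b"] derivation_uminus[of D b] by simp

lemma derivation_divide: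
  assumes D: "is_C_derivation D" and b: "b \<noteq> 0"
  shows "D (a / b) = (D a * b - a * D b) / b\<^sup>2"
proof -
  have "D a = D (a / b * b)" using b by simp
  also have "\<dots> = D (a / b) * b + a / b * D b" by (rule derivation_mult[OF D])
  finally show ?thesis using b by (simp add: field_simps power2_eq_square)
qed

definition is_derivation_along :: "(L \<Rightarrow> L) \<Rightarrow> (L \<Rightarrow> L) \<Rightarrow> bool" where
  "is_derivation_along f d \<longleftrightarrow>
     (\<forall>a b. d (a + b) = d a + d b) \<and> (\<forall>a b. d (a * b) = d a * f b + f a * d b) \<and>
     (\<forall>c. d (constC c) = 0)"

lemma derivation_along_ext:
  assumes f: "is_field_endo f" and d1: "is_derivation_along f d1" and d2: "is_derivation_along f d2"
    and gens: "\<And>k. k \<le> 8 \<Longrightarrow> d1 (gen k) = d2 (gen k)"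
  shows "d1 = d2"
proof
  have on_R: "d1 (Fract r 1) = d2 (Fract r 1)" for r
  proof (induction r rule: R_induct)
    case (add p q)
    have "Fract (p + q) 1 = Fract p 1 + Fract q 1" by simp
    then show ?case
      using add.IH d1 d2 unfolding is_derivation_along_def by (simp only:)
  next
    case (mult p q)
    have "Fract (p * q) 1 = Fract p 1 * Fract q 1" by simp
    then show ?case
      using mult.IH d1 d2 unfolding is_derivation_along_def by (simp only:)
  next
    case (const c)
    show ?case using d1 d2 by (simp add: is_derivation_along_def flip: constC_constR)
  next
    case (gen k)
    then show ?case using gens by (simp add: gen_def)
  qed
  fix q
  show "d1 q = d2 q"
  proof (cases q)
    case (Fract a b)
    then have q: "Fract a 1 = q * Fract b 1" and b: "Fract b 1 \<noteq> 0"
      by (simp_all add: eq_fract Zero_fract_def)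
    have "d1 (Fract a 1) = d1 q * f (Fract b 1) + f q * d1 (Fract b 1)"
      "d2 (Fract a 1) = d2 q * f (Fract b 1) + f q * d2 (Fract b 1)"
      using d1 d2 unfolding q is_derivation_along_def by blast+
    then have "d1 q * f (Fract b 1) = d2 q * f (Fract b 1)"
      using on_R[of a] on_R[of b] by (metis add_right_cancel)
    then show ?thesis using b by (simp add: field_endo_eq_0_iff f)
  qed
qed

text \<open>Both \<open>f \<circ> D\<close> and \<open>D \<circ> f\<close> are derivations along \<open>f\<close>.\<close>

lemma field_endo_commutes_with_derivation:
  assumes f: "is_field_endo f" and D: "is_C_derivation D"
    and gens: "\<And>k. k \<le> 8 \<Longrightarrow> f (D (gen k)) = D (f (gen k))"
  shows "f \<circ> D = D \<circ> f"
proof (rule derivation_along_ext[OF f])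
  show "is_derivation_along f (f \<circ> D)" "is_derivation_along f (D \<circ> f)"
    using D derivation_0[OF D]
    by (simp_all add: is_derivation_along_def is_C_derivation_def field_endo_simps f)
qed (simp add: gens)

section \<open>The \<open>\<tau>\<close>-functions and the Painlev\'e equation\<close>

text \<open>Indices are numerals: normalise \<open>Suc 0\<close> to \<open>1\<close> rather than the other way round.\<close>

declare One_nat_def [simp del] add_2_eq_Suc [simp del] add_2_eq_Suc' [simp del]
lemmas Suc_0_eq_1 [simp] = One_nat_def[symmetric]

lemma less_3_cases: "i < (3::nat) \<Longrightarrow> i = 0 \<or> i = 1 \<or> i = 2"
  by presburger

lemma alpha_cong: "m mod 3 = n mod 3 \<Longrightarrow> alpha m = alpha n"
  and tau_cong: "m mod 3 = n mod 3 \<Longrightarrow> tau m = tau n"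
  and taup_cong: "m mod 3 = n mod 3 \<Longrightarrow> taup m = taup n"
  unfolding alpha_def tau_def taup_def by simp_all

lemma F1_cong: "m mod 3 = n mod 3 \<Longrightarrow> F1 m = F1 n"
  unfolding F1_def by (metis tau_cong taup_cong)

lemma alpha_sum: "alpha n + alpha (n + 1) + alpha (n + 2) = 3"
proof -
  define r where "r = n mod 3"
  have "alpha n = alpha r" "alpha (n + 1) = alpha (r + 1)" "alpha (n + 2) = alpha (r + 2)"
    unfolding r_def by (rule alpha_cong, simp add: mod_simps)+
  moreover have "r = 0 \<or> r = 1 \<or> r = 2" unfolding r_def by presburger
  then have "alpha r + alpha (r + 1) + alpha (r + 2) = 3" by (elim disjE) (simp_all add: alpha_def)
  ultimately show ?thesis by simp
qed

lemma alpha_last: "alpha (n + 2) = 3 - alpha n - alpha (n + 1)"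
  using alpha_sum[of n] by (simp add: algebra_simps)

lemma alpha_reduce [simp]: "3 \<le> n \<Longrightarrow> alpha n = alpha (n mod 3)"
  and tau_reduce [simp]: "3 \<le> n \<Longrightarrow> tau n = tau (n mod 3)"
  and taup_reduce [simp]: "3 \<le> n \<Longrightarrow> taup n = taup (n mod 3)"
  by (simp_all add: alpha_def tau_def taup_def)

lemma F1_reduce [simp]: "3 \<le> n \<Longrightarrow> F1 n = F1 (n mod 3)"
  by (simp add: F1_def)

lemma phi_reduce [simp]: "3 \<le> n \<Longrightarrow> phi n = phi (n mod 3)"
proof -
  have "F1 (n + 1) = F1 (n mod 3 + 1)" "F1 (n + 2) = F1 (n mod 3 + 2)"
    by (rule F1_cong, simp add: mod_simps)+
  then show ?thesis unfolding phi_def[folded F1_def] by (simp only:)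
qed

lemma alpha_gen: "alpha 0 = gen 0" "alpha 1 = gen 1" "alpha 2 = 3 - gen 0 - gen 1"
  by (simp_all add: alpha_def)

lemma gen_tau: "gen 3 = tau 0" "gen 4 = tau 1" "gen 5 = tau 2"
  and gen_taup: "gen 6 = taup 0" "gen 7 = taup 1" "gen 8 = taup 2"
  by (simp_all add: tau_def taup_def)

lemma phi_F1: "phi 0 = F1 1 - F1 2 + xL" "phi 1 = F1 2 - F1 0 + xL" "phi 2 = F1 0 - F1 1 + xL"
  by (simp_all add: phi_def flip: F1_def)

lemma F1_1_eq_phi_0: "F1 1 = phi 0 + F1 2 - xL"
  by (simp add: phi_F1)

lemma F2_F1: "F2 0 = - xL * (F1 1 - F1 2) - (F1 0 - F1 1) * (F1 0 - F1 2) - (alpha 1 - alpha 2) / 3"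
    "F2 1 = - xL * (F1 2 - F1 0) - (F1 1 - F1 2) * (F1 1 - F1 0) - (alpha 2 - alpha 0) / 3"
    "F2 2 = - xL * (F1 0 - F1 1) - (F1 2 - F1 0) * (F1 2 - F1 1) - (alpha 0 - alpha 1) / 3"
  by (simp_all add: F2_def)

lemma alpha_in_subst_dom [simp]: "alpha j \<in> subst_dom y"
  and tau_in_subst_dom [simp]: "tau j \<in> subst_dom y"
  and taup_in_subst_dom [simp]: "taup j \<in> subst_dom y"
  and xL_in_subst_dom [simp]: "xL \<in> subst_dom y"
  unfolding alpha_def tau_def taup_def xL_def by simp_all

lemma numeral_L_nonzero [simp]: "(numeral n :: L) \<noteq> 0"
proof -
  have "(numeral n :: L) = Fract (numeral n) 1" using of_nat_fract[of "numeral n"] by simp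
  moreover have "Fract (numeral n :: R) 1 \<noteq> Fract 0 1" by (simp add: eq_fract)
  ultimately show ?thesis by (simp add: Zero_fract_def)
qed

text \<open>Specialising every indeterminate to \<open>1\<close> sends \<open>\<tau>\<^sub>j\<close> and \<open>\<phi>\<^sub>j\<close> to \<open>1\<close>.\<close>

lemma tau_nonzero [simp]: "tau j \<noteq> 0"
  and phi_nonzero [simp]: "phi j \<noteq> 0"
proof -
  have "subst (\<lambda>_. 1) (tau j) = 1" "subst (\<lambda>_. 1) (phi j) = 1"
    by (simp_all add: phi_def tau_def taup_def xL_def)
  then show "tau j \<noteq> 0" "phi j \<noteq> 0" by (metis subst_0 zero_neq_one)+
qed

lemma tau_F1 [simp]: "tau j * F1 j = taup j"
  by (simp add: F1_def)

context
  fixes D :: "L \<Rightarrow> L"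
  assumes D: "is_prime_derivation D"
begin

lemma C_derivation_D: "is_C_derivation D"
  using D unfolding is_prime_derivation_def by blast

lemmas D_simps [simp] =
  derivation_add[OF C_derivation_D] derivation_mult[OF C_derivation_D]
  derivation_uminus[OF C_derivation_D] derivation_diff[OF C_derivation_D]

lemma D_alpha [simp]: "D (alpha i) = 0"
  and D_xL [simp]: "D xL = 1"
  and D_tau [simp]: "D (tau i) = taup i"
  and D_taup [simp]: "D (taup i) = tau i * (F2 i + (F1 i)\<^sup>2)"
  using D unfolding is_prime_derivation_def by simp_all

lemma D_F1 [simp]: "D (F1 j) = F2 j"
  by (simp add: F1_def derivation_divide[OF C_derivation_D] field_simps power2_eq_square)

lemma D_phi: "D (phi i) = alpha i - phi i * (phi (i + 1) - phi (i + 2))"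
proof -
  have F1_period: "F1 (i + 1 + 1) = F1 (i + 2)" "F1 (i + 1 + 2) = F1 i"
      "F1 (i + 2 + 1) = F1 i" "F1 (i + 2 + 2) = F1 (i + 1)"
    by (rule F1_cong, presburger)+
  have alpha_period: "alpha (i + 1 + 1) = alpha (i + 2)" "alpha (i + 1 + 2) = alpha i"
      "alpha (i + 2 + 1) = alpha i" "alpha (i + 2 + 2) = alpha (i + 1)"
    by (rule alpha_cong, presburger)+
  have "D (phi i) = F2 (i + 1) - F2 (i + 2) + 1"
    by (simp add: phi_def flip: F1_def)
  also have "\<dots> = alpha i - phi i * (phi (i + 1) - phi (i + 2))"
    unfolding F2_def[of "i + 1"] F2_def[of "i + 2"] phi_def[folded F1_def] F1_period alpha_period
      alpha_last
    by (simp add: field_simps)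
  finally show ?thesis .
qed

text \<open>The generators \<open>\<tau>\<^sub>j'\<close> need not be checked: they are the derivatives \<open>D \<tau>\<^sub>j\<close>.\<close>

lemma diff_aut_ext:
  assumes f: "diff_aut D f" and g: "diff_aut D g"
    and "f (alpha 0) = g (alpha 0)" "f (alpha 1) = g (alpha 1)" "f xL = g xL"
    and tau: "\<And>j. j < 3 \<Longrightarrow> f (tau j) = g (tau j)"
  shows "f = g"
proof -
  have fD: "f (D a) = D (f a)" and gD: "g (D a) = D (g a)" for a
    using f g unfolding diff_aut_def by blast+
  have taup: "f (taup j) = g (taup j)" if "j < 3" for j
    using fD[of "tau j"] gD[of "tau j"] tau[OF that] by (simp add: D)
  have gens: "f (gen k) = g (gen k)" if "k \<le> 8" for k
  proof -
    have "k = 0 \<or> k = 1 \<or> k = 2 \<or> k = 3 \<or> k = 4 \<or> k = 5 \<or> k = 6 \<or> k = 7 \<or> k = 8"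
      using that by presburger
    then show ?thesis
      using assms(3-5)[unfolded alpha_gen xL_def] tau[of 0] tau[of 1] tau[of 2]
        taup[of 0] taup[of 1] taup[of 2]
      by (elim disjE) (simp_all add: gen_tau gen_taup)
  qed
  show ?thesis
    using f g gens by (intro field_endo_ext) (simp_all add: diff_aut_iff)
qed

end

section \<open>The rotation \<open>\<pi>\<close>\<close>

text \<open>\<open>rot n\<close> is \<open>\<pi>\<^sup>n\<close>: it shifts the indices of \<open>\<alpha>\<close>, \<open>\<tau>\<close> and \<open>\<tau>'\<close> by \<open>n\<close>.\<close>

definition rot_images :: "nat \<Rightarrow> nat \<Rightarrow> L" where
  "rot_images n k = (if k = 0 then alpha n else if k = 1 then alpha (n + 1) else if k = 2 then xL
     else if k \<le> 5 then tau (k - 3 + n) else taup (k - 6 + n))"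

definition rot :: "nat \<Rightarrow> L \<Rightarrow> L" where
  "rot n = subst (rot_images n)"

lemma rot_xL [simp]: "rot n xL = xL"
  by (simp add: rot_def xL_def rot_images_def)

lemma rot_alpha [simp]: "rot n (alpha j) = alpha (j + n)"
proof -
  define r where "r = j mod 3"
  have "alpha j = alpha r" "alpha (j + n) = alpha (r + n)"
    unfolding r_def by (rule alpha_cong, simp add: mod_simps)+
  moreover have "rot n (alpha 0) = alpha n" "rot n (alpha 1) = alpha (1 + n)"
    "rot n (alpha 2) = alpha (2 + n)"
    by (simp_all add: rot_def rot_images_def alpha_gen alpha_last add.commute)
  moreover have "r = 0 \<or> r = 1 \<or> r = 2" unfolding r_def by presburger
  ultimately show ?thesis by (elim disjE) simp_all
qed

lemma rot_tau [simp]: "rot n (tau j) = tau (j + n)"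
  and rot_taup [simp]: "rot n (taup j) = taup (j + n)"
proof -
  have "j mod 3 \<le> 2" by presburger
  then have "rot n (tau j) = tau (j mod 3 + n)" "rot n (taup j) = taup (j mod 3 + n)"
    by (simp_all add: rot_def rot_images_def tau_def[of j] taup_def[of j])
  moreover have "tau (j mod 3 + n) = tau (j + n)" "taup (j mod 3 + n) = taup (j + n)"
    by (rule tau_cong taup_cong, simp add: mod_simps)+
  ultimately show "rot n (tau j) = tau (j + n)" "rot n (taup j) = taup (j + n)"
    by simp_all
qed

lemma rot_images_in_subst_dom [simp]: "rot_images n k \<in> subst_dom y"
  by (simp add: rot_images_def)

lemma rot_rot_images: "rot m (rot_images n k) = rot_images (n + m) k"
  by (simp add: rot_images_def algebra_simps)

lemma rot_images_mod: "rot_images (n mod 3) = rot_images n"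
proof -
  have "alpha (n mod 3) = alpha n" "alpha (n mod 3 + 1) = alpha (n + 1)"
    "tau (m + n mod 3) = tau (m + n)" "taup (m + n mod 3) = taup (m + n)" for m
    by (rule alpha_cong tau_cong taup_cong, simp add: mod_simps)+
  then show ?thesis unfolding rot_images_def by (simp only:)
qed

lemma rot_images_0: "k \<le> 8 \<Longrightarrow> rot_images 0 k = gen k"
proof -
  assume "k \<le> 8"
  then have "k = 0 \<or> k = 1 \<or> k = 2 \<or> k = 3 \<or> k = 4 \<or> k = 5 \<or> k = 6 \<or> k = 7 \<or> k = 8" by auto
  then show ?thesis
    by (elim disjE) (simp_all add: rot_images_def alpha_gen xL_def tau_def taup_def)
qed

lemma rot_images_period: "k \<le> 8 \<Longrightarrow> rot_images (3 * q) k = gen k"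
  by (metis rot_images_0 rot_images_mod mod_mult_self1_is_0)

lemma inj_subst_R_rot_images: "inj (subst_R (rot_images n))"
proof (rule inj_subst_R_if_inverse[where z = "rot_images (2 * n)"])
  fix k :: nat
  assume "k \<le> 8"
  have "subst (rot_images (2 * n)) (rot_images n k) = rot_images (3 * n) k"
    using rot_rot_images[of "2 * n" n k] by (simp add: rot_def)
  with \<open>k \<le> 8\<close> show "rot_images n k \<in> subst_dom (rot_images (2 * n)) \<and>
      subst (rot_images (2 * n)) (rot_images n k) = gen k"
    by (simp add: rot_images_period)
qed

lemma field_endo_rot: "is_field_endo (rot n)"
  unfolding rot_def by (rule field_endo_subst[OF inj_subst_R_rot_images])

lemmas rot_simps [simp] = field_endo_simps[OF field_endo_rot]

lemma rot_comp: "rot m \<circ> rot n = rot (n + m)"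
proof (rule field_endo_ext)
  fix k :: nat
  assume "k \<le> 8"
  then show "(rot m \<circ> rot n) (gen k) = rot (n + m) (gen k)"
    using rot_rot_images[of m n k] by (simp add: rot_def)
qed (simp_all add: field_endo_comp field_endo_rot)

lemma rot_mod: "rot (n mod 3) = rot n"
  unfolding rot_def rot_images_mod ..

lemma rot_rot [simp]: "rot m (rot n x) = rot (n + m) x"
  using rot_comp[of m n] by (simp add: fun_eq_iff)

lemma rot_reduce [simp]: "3 \<le> n \<Longrightarrow> rot n x = rot (n mod 3) x"
  by (simp add: rot_mod)

lemma rot_0: "rot 0 = id"
  by (rule field_endo_ext)
    (simp_all add: field_endo_rot field_endo_id, simp add: rot_def rot_images_0)

lemma rot_0_apply [simp]: "rot 0 x = x"
  by (simp add: rot_0)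

lemma rot_3mult: "rot (3 * q) = id"
  by (metis rot_0 rot_mod mod_mult_self1_is_0)

lemma bij_rot: "bij (rot n)"
  by (rule o_bij[where g = "rot (2 * n)"]) (simp_all add: rot_comp rot_3mult[of n, simplified])

lemma rot_F1 [simp]: "rot n (F1 j) = F1 (j + n)"
  and rot_phi [simp]: "rot n (phi j) = phi (j + n)"
  and rot_F2 [simp]: "rot n (F2 j) = F2 (j + n)"
  by (simp_all add: F1_def phi_def F2_def algebra_simps)

lemma rot_cube: "rot 1 \<circ> rot 1 \<circ> rot 1 = id"
  by (simp add: fun_eq_iff)

context
  fixes D :: "L \<Rightarrow> L"
  assumes D: "is_prime_derivation D"
begin

lemma rot_commutes_D: "rot n \<circ> D = D \<circ> rot n"
proof (rule field_endo_commutes_with_derivation[OF field_endo_rot C_derivation_D[OF D]])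
  fix k :: nat
  assume "k \<le> 8"
  then have "gen k = rot_images 0 k" by (simp add: rot_images_0)
  moreover have "k = 0 \<or> k = 1 \<or> k = 2 \<or> k = 3 \<or> k = 4 \<or> k = 5 \<or> k = 6 \<or> k = 7 \<or> k = 8"
    using \<open>k \<le> 8\<close> by presburger
  ultimately show "rot n (D (gen k)) = D (rot n (gen k))"
    by (elim disjE) (simp_all add: rot_images_def D)
qed

lemma diff_aut_rot: "diff_aut D (rot n)"
  by (simp add: diff_aut_iff field_endo_rot bij_rot rot_commutes_D)

end

section \<open>The reflection \<open>s\<^sub>0\<close>\<close>

definition tau_refl :: "nat \<Rightarrow> L" where
  "tau_refl i = tau (i + 1) * tau (i + 2) * phi i / tau i"

definition F1_refl :: "nat \<Rightarrow> L" where
  "F1_refl i = F1 i + alpha i / phi i"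

lemma tau_refl_nonzero [simp]: "tau_refl i \<noteq> 0"
  by (simp add: tau_refl_def)

lemma rot_tau_refl [simp]: "rot n (tau_refl i) = tau_refl (i + n)"
  by (simp add: tau_refl_def algebra_simps)

definition s0_images :: "nat \<Rightarrow> L" where
  "s0_images k = (if k = 0 then - alpha 0 else if k = 1 then alpha 1 + alpha 0
     else if k = 3 then tau_refl 0 else if k = 6 then tau_refl 0 * F1_refl 0 else gen k)"

abbreviation s0 :: "L \<Rightarrow> L" where
  "s0 \<equiv> subst s0_images"

lemma s0_alpha: "s0 (alpha 0) = - alpha 0" "s0 (alpha 1) = alpha 1 + alpha 0"
    "s0 (alpha 2) = alpha 2 + alpha 0"
  by (simp_all add: alpha_gen s0_images_def)

lemma s0_xL: "s0 xL = xL"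
  by (simp add: xL_def s0_images_def)

lemma s0_tau: "s0 (tau 0) = tau_refl 0" "s0 (tau 1) = tau 1" "s0 (tau 2) = tau 2"
  and s0_taup: "s0 (taup 0) = tau_refl 0 * F1_refl 0" "s0 (taup 1) = taup 1" "s0 (taup 2) = taup 2"
  by (simp_all add: tau_def taup_def s0_images_def)

lemma F1_in_subst_dom_s0 [simp]: "F1 j \<in> subst_dom s0_images"
  and s0_F1: "s0 (F1 0) = F1_refl 0" "s0 (F1 1) = F1 1" "s0 (F1 2) = F1 2"
proof -
  have "j mod 3 = 0 \<or> j mod 3 = 1 \<or> j mod 3 = 2" by presburger
  then have "s0 (tau j) \<noteq> 0"
    by (elim disjE) (simp_all add: tau_cong[of j 0] tau_cong[of j 1] tau_cong[of j 2] s0_tau)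
  then show "F1 j \<in> subst_dom s0_images" by (simp add: F1_def)
  show "s0 (F1 0) = F1_refl 0" "s0 (F1 1) = F1 1" "s0 (F1 2) = F1 2"
    by (simp_all add: F1_def s0_tau s0_taup)
qed

lemma phi_in_subst_dom_s0 [simp]: "phi j \<in> subst_dom s0_images"
  by (simp add: phi_def flip: F1_def)

lemma s0_phi: "s0 (phi 0) = phi 0" "s0 (phi 1) = phi 1 - alpha 0 / phi 0"
    "s0 (phi 2) = phi 2 + alpha 0 / phi 0"
  by (simp_all add: phi_F1 s0_F1 s0_xL F1_refl_def)

lemma tau_refl_in_subst_dom_s0 [simp]: "tau_refl 0 \<in> subst_dom s0_images"
  and F1_refl_in_subst_dom_s0 [simp]: "F1_refl 0 \<in> subst_dom s0_images"
  and s0_tau_refl: "s0 (tau_refl 0) = tau 0"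
  and s0_F1_refl: "s0 (F1_refl 0) = F1 0"
  by (simp_all add: tau_refl_def F1_refl_def s0_tau s0_phi s0_alpha s0_F1)

lemma s0_s0_images: "k \<le> 8 \<Longrightarrow> s0_images k \<in> subst_dom s0_images \<and> s0 (s0_images k) = gen k"
proof -
  assume "k \<le> 8"
  then have "k = 0 \<or> k = 1 \<or> k = 2 \<or> k = 3 \<or> k = 4 \<or> k = 5 \<or> k = 6 \<or> k = 7 \<or> k = 8"
    by presburger
  then show ?thesis
    by (elim disjE) (simp_all add: s0_images_def s0_alpha s0_tau s0_taup s0_tau_refl s0_F1_refl
        alpha_gen gen_tau gen_taup)
qed

lemma field_endo_s0: "is_field_endo s0"
  by (intro field_endo_subst inj_subst_R_if_inverse[where z = s0_images] s0_s0_images)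

lemmas s0_simps [simp] = field_endo_simps[OF field_endo_s0]

lemma s0_involutive: "s0 \<circ> s0 = id"
  by (rule field_endo_ext) (simp_all add: field_endo_comp field_endo_s0 field_endo_id s0_s0_images)

lemma s0_s0 [simp]: "s0 (s0 x) = x"
  using s0_involutive by (simp add: fun_eq_iff)

lemma s0_F2: "s0 (F2 1) = F2 1" "s0 (F2 2) = F2 2"
  using phi_nonzero[of 0]
  unfolding F2_F1
  by (simp_all add: s0_F1 s0_alpha s0_xL s0_phi F1_refl_def F1_1_eq_phi_0 field_simps)

context
  fixes D :: "L \<Rightarrow> L"
  assumes D: "is_prime_derivation D"
begin

lemma D_tau_refl: "D (tau_refl 0) = tau_refl 0 * F1_refl 0"
  using tau_nonzero[of 0] phi_nonzero[of 0]
  by (simp add: tau_refl_def F1_refl_def derivation_divide[OF C_derivation_D[OF D]] D D_phi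
      phi_F1(2,3) field_simps power2_eq_square flip: tau_F1)

lemma s0_F2_0: "s0 (F2 0) = D (F1_refl 0)"
  using phi_nonzero[of 0]
  by (simp add: F2_F1(1) s0_F1 s0_alpha s0_xL s0_phi F1_refl_def
      derivation_divide[OF C_derivation_D[OF D]] D D_phi phi_F1(2,3) F1_1_eq_phi_0 field_simps
      power2_eq_square)

lemma s0_commutes_D: "s0 \<circ> D = D \<circ> s0"
proof (rule field_endo_commutes_with_derivation[OF field_endo_s0 C_derivation_D[OF D]])
  fix k :: nat
  assume "k \<le> 8"
  then have "k = 0 \<or> k = 1 \<or> k = 2 \<or> k = 3 \<or> k = 4 \<or> k = 5 \<or> k = 6 \<or> k = 7 \<or> k = 8"
    by presburger
  then show "s0 (D (gen k)) = D (s0 (gen k))"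
    by (elim disjE) (simp_all add: D alpha_gen[symmetric] gen_tau gen_taup s0_alpha s0_xL s0_tau
        s0_taup s0_F1 s0_F2 s0_F2_0 D_tau_refl xL_def[symmetric] power2_eq_square algebra_simps)
qed

lemma diff_aut_s0: "diff_aut D s0"
  using s0_involutive
  by (simp add: diff_aut_iff field_endo_s0 s0_commutes_D o_bij[of s0 s0])

lemma hirota_tau:
  "hirota D (tau (i + 1)) (tau (i + 2)) =
     taup (i + 1) * tau (i + 2) - tau (i + 1) * taup (i + 2) + xL * tau (i + 1) * tau (i + 2)"
  by (simp add: hirota_def D)

lemma tau_refl_hirota: "tau_refl i = hirota D (tau (i + 1)) (tau (i + 2)) / tau i"
  unfolding hirota_tau tau_refl_def phi_def by (simp add: field_simps)

end

section \<open>The reflections \<open>s\<^sub>i\<close>\<close>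

text \<open>\<open>s\<^sub>i = \<pi>\<^sup>i s\<^sub>0 \<pi>\<^sup>-\<^sup>i\<close>, where \<open>\<pi>\<^sup>-\<^sup>i = \<pi>\<^sup>2\<^sup>i\<close>.\<close>

definition reflection :: "nat \<Rightarrow> L \<Rightarrow> L" where
  "reflection i = rot i \<circ> s0 \<circ> rot (2 * i)"

lemma field_endo_reflection: "is_field_endo (reflection i)"
  unfolding reflection_def by (intro field_endo_comp field_endo_rot field_endo_s0)

lemma reflection_xL: "reflection i xL = xL"
  by (simp add: reflection_def s0_xL)

lemma reflection_alpha:
  "i < 3 \<Longrightarrow> j < 3 \<Longrightarrow> reflection i (alpha j) = (if j = i then - alpha i else alpha j + alpha i)"
  by (drule less_3_cases)+ (elim disjE; simp add: reflection_def s0_alpha)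

lemma reflection_tau:
  "i < 3 \<Longrightarrow> j < 3 \<Longrightarrow> reflection i (tau j) = (if j = i then tau_refl i else tau j)"
  by (drule less_3_cases)+ (elim disjE; simp add: reflection_def s0_tau)

lemma reflection_phi:
  assumes "i < 3"
  shows "reflection i (phi i) = phi i"
    and "reflection i (phi (i + 1)) = phi (i + 1) - alpha i / phi i"
    and "reflection i (phi (i + 2)) = phi (i + 2) + alpha i / phi i"
  using less_3_cases[OF assms] by (elim disjE; simp add: reflection_def s0_phi)+

lemma reflection_involutive: "i < 3 \<Longrightarrow> reflection i \<circ> reflection i = id"
  by (drule less_3_cases) (elim disjE; simp add: fun_eq_iff reflection_def)

lemma rot_reflection: "i < 3 \<Longrightarrow> rot 1 \<circ> reflection i = reflection ((i + 1) mod 3) \<circ> rot 1"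
  by (drule less_3_cases) (elim disjE; simp add: fun_eq_iff reflection_def)

context
  fixes D :: "L \<Rightarrow> L"
  assumes D: "is_prime_derivation D"
begin

lemma diff_aut_reflection: "diff_aut D (reflection i)"
  unfolding reflection_def by (intro diff_aut_comp diff_aut_rot diff_aut_s0 D)

lemma braid_01: "s0 \<circ> reflection 1 \<circ> s0 = reflection 1 \<circ> s0 \<circ> reflection 1"
proof (rule diff_aut_ext[OF D])
  show "diff_aut D (s0 \<circ> reflection 1 \<circ> s0)" "diff_aut D (reflection 1 \<circ> s0 \<circ> reflection 1)"
    by (intro diff_aut_comp diff_aut_reflection diff_aut_s0 D)+
  have "s0 (phi 1) \<noteq> 0" "reflection 1 (phi 0) \<noteq> 0"
    using field_endo_s0 field_endo_reflection by (simp_all add: field_endo_eq_0_iff)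
  then have nonzero: "phi 1 - alpha 0 / phi 0 \<noteq> 0" "phi 0 + alpha 1 / phi 1 \<noteq> 0"
    using reflection_phi(3)[of 1] by (simp_all add: s0_phi)
  fix j :: nat
  assume "j < 3"
  then show "(s0 \<circ> reflection 1 \<circ> s0) (tau j) = (reflection 1 \<circ> s0 \<circ> reflection 1) (tau j)"
    using nonzero
    by (auto dest!: less_3_cases simp: reflection_def tau_refl_def s0_tau s0_phi s0_alpha;
        simp add: divide_simps; simp add: algebra_simps)
qed (simp_all add: reflection_def s0_alpha s0_xL)

lemma reflection_braid: "i < 3 \<Longrightarrow>
    reflection i \<circ> reflection ((i + 1) mod 3) \<circ> reflection i =
    reflection ((i + 1) mod 3) \<circ> reflection i \<circ> reflection ((i + 1) mod 3)"
proof -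
  have braid_01_apply:
    "s0 (rot 1 (s0 (rot 2 (s0 x)))) = rot 1 (s0 (rot 2 (s0 (rot 1 (s0 (rot 2 x))))))" for x
    using braid_01 by (simp add: fun_eq_iff reflection_def)
  assume "i < 3"
  then show ?thesis
    by (drule_tac less_3_cases) (elim disjE; simp add: fun_eq_iff reflection_def braid_01_apply)
qed

end

theorem theorem3p2:
  fixes D :: "L \<Rightarrow> L"
  assumes "is_prime_derivation D"
  shows "\<exists>(s :: nat \<Rightarrow> L \<Rightarrow> L) (p :: L \<Rightarrow> L).
     (\<forall>i<3. diff_aut D (s i)) \<and> diff_aut D p \<and>
     (\<forall>i<3. s i xL = xL) \<and> p xL = xL \<and>
     (\<forall>i<3. s i (alpha i) = - alpha i) \<and>
     (\<forall>i<3. \<forall>j<3. j \<noteq> i \<longrightarrow> s i (alpha j) = alpha j + alpha i) \<and>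
     (\<forall>j<3. p (alpha j) = alpha (j+1)) \<and>
     (\<forall>i<3. s i (tau i) = hirota D (tau (i+1)) (tau (i+2)) / tau i) \<and>
     (\<forall>i<3. s i (tau i) =
        (taup (i+1) * tau (i+2) - tau (i+1) * taup (i+2) + xL * tau (i+1) * tau (i+2)) / tau i) \<and>
     (\<forall>i<3. \<forall>j<3. j \<noteq> i \<longrightarrow> s i (tau j) = tau j) \<and>
     (\<forall>j<3. p (tau j) = tau (j+1)) \<and>
     (\<forall>i<3. s i \<circ> s i = id) \<and>
     (\<forall>i<3. s i \<circ> s ((i+1) mod 3) \<circ> s i = s ((i+1) mod 3) \<circ> s i \<circ> s ((i+1) mod 3)) \<and>
     p \<circ> p \<circ> p = id \<and>
     (\<forall>i<3. p \<circ> s i = s ((i+1) mod 3) \<circ> p) \<and>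
     (\<forall>j<3. s j (phi j) = phi j) \<and>
     (\<forall>j<3. s j (phi (j+1)) = phi (j+1) - alpha j / phi j) \<and>
     (\<forall>j<3. s j (phi (j+2)) = phi (j+2) + alpha j / phi j) \<and>
     (\<forall>i<3. p (phi i) = phi (i+1))"
  using assms
  by (intro exI[of _ reflection] exI[of _ "rot 1"] conjI allI impI)
    (simp_all add: diff_aut_reflection diff_aut_rot reflection_xL reflection_alpha reflection_tau
      reflection_phi tau_refl_hirota hirota_tau reflection_involutive reflection_braid
      rot_reflection rot_cube)

end
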